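(* Let $E$ be a bounded spectral family in a $\sigma$-complete orthomodular lattice $\mathbb{L}$. Then the function $f_E:\mathcal{Q}(\mathbb{L})\to\mathbb{R}$, $f_E(\mathfrak{B}):=\inf\{\lambda\in\mathbb{R}\mid E_\lambda\in\mathfrak{B}\}$, is continuous.
   Context: A spectral family in a $\sigma$-complete lattice $\mathbb{L}$ (with $0$ and $1$) is a map $E:\mathbb{R}\to\mathbb{L}$ with (1) $E_\lambda\le E_\mu$ for $\lambda\le\mu$; (2) $E_\lambda=\bigwedge_{\mu>\lambda}E_\mu$; (3) $\bigwedge_\lambda E_\lambda=0$, $\bigvee_\lambda E_\lambda=1$. $E$ is bounded if there are $a\le b$ with $E_\lambda=0$ for $\lambda<a$ and $E_\lambda=1$ for $\lambda\ge b$. A quasipoint of $\mathbb{L}$ is a maximal dual ideal (a dual ideal being a nonempty, upward closed subset not containing $0$ and closed under finite meets). The Stone spectrum $\mathcal{Q}(\mathbb{L})$ is the set of quasipoints with topology generated by the base $\mathcal{Q}_a(\mathbb{L})=\{\mathfrak{B}\mid a\in\mathfrak{B}\}$, $a\in\mathbb{L}$. *)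

theory Defs
  imports "HOL-Analysis.Analysis"
begin

text \<open>Lattice-theoretic infima/suprema of arbitrary subsets (they need not exist in general).\<close>

definition is_infimum :: "'a::order \<Rightarrow> 'a set \<Rightarrow> bool" where
  "is_infimum x S \<longleftrightarrow> (\<forall>s\<in>S. x \<le> s) \<and> (\<forall>y. (\<forall>s\<in>S. y \<le> s) \<longrightarrow> y \<le> x)"

definition is_supremum :: "'a::order \<Rightarrow> 'a set \<Rightarrow> bool" where
  "is_supremum x S \<longleftrightarrow> (\<forall>s\<in>S. s \<le> x) \<and> (\<forall>y. (\<forall>s\<in>S. s \<le> y) \<longrightarrow> x \<le> y)"

definition sigma_complete :: "'a::bounded_lattice itself \<Rightarrow> bool" where
  "sigma_complete _ \<longleftrightarrow>
     (\<forall>S::'a set. countable S \<longrightarrow> (\<exists>x. is_supremum x S) \<and> (\<exists>x. is_infimum x S))"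

definition orthomodular :: "('a::bounded_lattice \<Rightarrow> 'a) \<Rightarrow> bool" where
  "orthomodular oc \<longleftrightarrow>
     (\<forall>x. inf x (oc x) = bot) \<and> (\<forall>x. sup x (oc x) = top) \<and>
     (\<forall>x. oc (oc x) = x) \<and> (\<forall>x y. x \<le> y \<longrightarrow> oc y \<le> oc x) \<and>
     (\<forall>x y. x \<le> y \<longrightarrow> y = sup x (inf y (oc x)))"

definition spectral_family :: "(real \<Rightarrow> 'a::bounded_lattice) \<Rightarrow> bool" where
  "spectral_family E \<longleftrightarrow>
     (\<forall>l m. l \<le> m \<longrightarrow> E l \<le> E m) \<and>
     (\<forall>l. is_infimum (E l) {E m | m. m > l}) \<and>
     is_infimum bot (range E) \<and> is_supremum top (range E)"

definition bounded_spectral_family :: "(real \<Rightarrow> 'a::bounded_lattice) \<Rightarrow> bool" where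
  "bounded_spectral_family E \<longleftrightarrow> spectral_family E \<and>
     (\<exists>a b. a \<le> b \<and> (\<forall>l. l < a \<longrightarrow> E l = bot) \<and> (\<forall>l. l \<ge> b \<longrightarrow> E l = top))"

definition dual_ideal :: "'a::bounded_lattice set \<Rightarrow> bool" where
  "dual_ideal F \<longleftrightarrow> F \<noteq> {} \<and> bot \<notin> F \<and>
     (\<forall>x y. x \<in> F \<and> x \<le> y \<longrightarrow> y \<in> F) \<and> (\<forall>x y. x \<in> F \<and> y \<in> F \<longrightarrow> inf x y \<in> F)"

definition quasipoint :: "'a::bounded_lattice set \<Rightarrow> bool" where
  "quasipoint B \<longleftrightarrow> dual_ideal B \<and> (\<forall>C. dual_ideal C \<and> B \<subseteq> C \<longrightarrow> C = B)"

definition quasipoints :: "'a::bounded_lattice set set" where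
  "quasipoints = {B. quasipoint B}"

definition Q_base :: "'a::bounded_lattice \<Rightarrow> 'a set set" where
  "Q_base a = {B. quasipoint B \<and> a \<in> B}"

definition stone_spectrum :: "'a::bounded_lattice set topology" where
  "stone_spectrum = topology_generated_by (range Q_base)"

definition observable_fun :: "(real \<Rightarrow> 'a::bounded_lattice) \<Rightarrow> 'a set \<Rightarrow> real" where
  "observable_fun E B = Inf {l. E l \<in> B}"

end

theory Submission
  imports Defs
begin

text \<open>Write \<open>f\<^sub>E\<close> for \<open>observable_fun E\<close>. Since \<open>E\<close> is bounded, \<open>{\<lambda>. E \<lambda> \<in> \<frak>B}\<close> is a nonempty
  set bounded below for every quasipoint \<open>\<frak>B\<close>, so \<open>f\<^sub>E \<frak>B < r\<close> iff \<open>E \<lambda> \<in> \<frak>B\<close> for some \<open>\<lambda> < r\<close>;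
  hence \<open>{f\<^sub>E < r}\<close> is the union of the basic open sets \<open>Q_base (E \<lambda>)\<close>, \<open>\<lambda> < r\<close>.
  If \<open>f\<^sub>E \<frak>B > \<mu> > r\<close>, then \<open>E \<mu> \<notin> \<frak>B\<close>, and maximality of \<open>\<frak>B\<close> yields \<open>b \<in> \<frak>B\<close> with
  \<open>E \<mu> \<sqinter> b = 0\<close>; monotonicity of \<open>E\<close> then keeps every \<open>E \<lambda>\<close>, \<open>\<lambda> < \<mu>\<close>, out of every quasipoint
  in \<open>Q_base b\<close>, so \<open>f\<^sub>E \<ge> \<mu>\<close> there.\<close>

lemma quasipoint_top: "quasipoint B \<Longrightarrow> top \<in> B"
  unfolding quasipoint_def dual_ideal_def by auto

lemma quasipoint_bot: "quasipoint B \<Longrightarrow> bot \<notin> B"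
  unfolding quasipoint_def dual_ideal_def by auto

lemma quasipoint_upward_closed: "quasipoint B \<Longrightarrow> x \<in> B \<Longrightarrow> x \<le> y \<Longrightarrow> y \<in> B"
  unfolding quasipoint_def dual_ideal_def by blast

lemma quasipoint_inf: "quasipoint B \<Longrightarrow> x \<in> B \<Longrightarrow> y \<in> B \<Longrightarrow> inf x y \<in> B"
  unfolding quasipoint_def dual_ideal_def by blast

lemma quasipoint_disjoint_of_notin:
  fixes B :: "'a::bounded_lattice set"
  assumes q: "quasipoint B" and a: "a \<notin> B"
  obtains b where "b \<in> B" "inf a b = bot"
proof (rule ccontr)
  assume "\<not> thesis"
  with that have meets: "\<forall>b\<in>B. inf a b \<noteq> bot" by blast
  define C where "C = {c. \<exists>b\<in>B. inf a b \<le> c}"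
  have "dual_ideal C"
    unfolding dual_ideal_def
  proof (intro conjI allI impI)
    show "C \<noteq> {}" and "bot \<notin> C"
      using quasipoint_top[OF q] meets unfolding C_def by (auto simp: bot_unique)
  next
    fix x y assume "x \<in> C \<and> x \<le> y" then show "y \<in> C"
      unfolding C_def by (auto intro: order_trans)
  next
    fix x y assume "x \<in> C \<and> y \<in> C"
    then obtain b1 b2 where "b1 \<in> B" "b2 \<in> B" "inf a b1 \<le> x" "inf a b2 \<le> y"
      unfolding C_def by auto
    moreover have "inf a (inf b1 b2) \<le> inf x y"
      using calculation(3,4) inf_mono[OF order_refl inf_le1, of a b1 b2]
        inf_mono[OF order_refl inf_le2, of a b1 b2] by (blast intro: le_infI order_trans)
    ultimately show "inf x y \<in> C"
      using quasipoint_inf[OF q] unfolding C_def by blast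
  qed
  moreover have "B \<subseteq> C" unfolding C_def using inf_le2 by blast
  ultimately have "C = B" using q unfolding quasipoint_def by auto
  moreover have "a \<in> C" using quasipoint_top[OF q] unfolding C_def by auto
  ultimately show False using a by auto
qed

lemma topspace_stone_spectrum: "topspace stone_spectrum = quasipoints"
  unfolding stone_spectrum_def Q_base_def quasipoints_def using quasipoint_top by auto

lemma openin_stone_spectrum_Q_base: "openin stone_spectrum (Q_base a)"
  unfolding stone_spectrum_def by (simp add: topology_generated_by_Basis)

context
  fixes E :: "real \<Rightarrow> 'a::bounded_lattice" and a b :: real
  assumes E_below: "\<And>l. l < a \<Longrightarrow> E l = bot" and E_top: "E b = top"
begin

lemma bdd_below_spectral_set:
  assumes "quasipoint B" shows "bdd_below {l. E l \<in> B}"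
proof (rule bdd_belowI)
  fix l assume "l \<in> {l. E l \<in> B}"
  then show "a \<le> l" using E_below[of l] quasipoint_bot[OF assms] by force
qed

lemma observable_fun_le: "quasipoint B \<Longrightarrow> E l \<in> B \<Longrightarrow> observable_fun E B \<le> l"
  unfolding observable_fun_def by (auto intro: cInf_lower bdd_below_spectral_set)

lemma observable_fun_less_iff:
  assumes "quasipoint B" shows "observable_fun E B < r \<longleftrightarrow> (\<exists>l<r. E l \<in> B)"
proof
  assume "observable_fun E B < r"
  moreover have "b \<in> {l. E l \<in> B}" using E_top quasipoint_top[OF assms] by simp
  ultimately show "\<exists>l<r. E l \<in> B" unfolding observable_fun_def using cInf_lessD[of "{l. E l \<in> B}" r] by blast
qed (use assms observable_fun_le in force)

lemma openin_observable_fun_less: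
  "openin stone_spectrum {B \<in> topspace stone_spectrum. observable_fun E B < r}"
proof -
  have "{B \<in> topspace stone_spectrum. observable_fun E B < r} = (\<Union>l\<in>{..<r}. Q_base (E l))"
    by (auto simp: topspace_stone_spectrum quasipoints_def Q_base_def observable_fun_less_iff)
  then show ?thesis by (auto intro: openin_stone_spectrum_Q_base)
qed

lemma openin_observable_fun_greater:
  assumes mono: "mono E"
  shows "openin stone_spectrum {B \<in> topspace stone_spectrum. observable_fun E B > r}"
proof (subst openin_subopen, safe)
  fix B assume "B \<in> topspace stone_spectrum" and gt: "r < observable_fun E B"
  then have q: "quasipoint B" by (simp add: topspace_stone_spectrum quasipoints_def)
  obtain \<mu> where \<mu>: "r < \<mu>" "\<mu> < observable_fun E B" using gt dense by blast
  then have "E \<mu> \<notin> B" using observable_fun_le[OF q] by force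
  then obtain c where c: "c \<in> B" "inf (E \<mu>) c = bot"
    using quasipoint_disjoint_of_notin[OF q] by blast
  have "\<mu> \<le> observable_fun E C" if "C \<in> Q_base c" for C
  proof (rule ccontr)
    assume "\<not> \<mu> \<le> observable_fun E C"
    moreover have qC: "quasipoint C" "c \<in> C" using that by (auto simp: Q_base_def)
    ultimately obtain l where "l < \<mu>" "E l \<in> C"
      using observable_fun_less_iff[OF qC(1), of \<mu>] by (meson not_le)
    then have "E \<mu> \<in> C" using quasipoint_upward_closed[OF qC(1)] monoD[OF mono, of l \<mu>] by simp
    then have "bot \<in> C" using quasipoint_inf[OF qC(1) _ qC(2)] c(2) by metis
    then show False using quasipoint_bot[OF qC(1)] by blast
  qed
  then have "Q_base c \<subseteq> {B \<in> topspace stone_spectrum. r < observable_fun E B}"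
    using \<mu>(1) by (fastforce simp: topspace_stone_spectrum quasipoints_def Q_base_def)
  moreover have "B \<in> Q_base c" using q c(1) by (simp add: Q_base_def)
  ultimately show "\<exists>T. openin stone_spectrum T \<and> B \<in> T \<and>
      T \<subseteq> {B \<in> topspace stone_spectrum. r < observable_fun E B}"
    using openin_stone_spectrum_Q_base by blast
qed

end

theorem proposition2p8:
  fixes oc :: "'a::bounded_lattice \<Rightarrow> 'a" and E :: "real \<Rightarrow> 'a"
  assumes "sigma_complete TYPE('a)"
    and "orthomodular oc"
    and "bounded_spectral_family E"
  shows "continuous_map stone_spectrum euclideanreal (observable_fun E)"
proof -
  obtain a b where "\<And>l. l < a \<Longrightarrow> E l = bot" "E b = top" and "mono E"
    using assms(3) unfolding bounded_spectral_family_def spectral_family_def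
    by (metis monoI order_refl)
  then show ?thesis
    unfolding continuous_map_upper_lower_semicontinuous_lt
    using openin_observable_fun_less openin_observable_fun_greater by blast
qed

end
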